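(* Let $\vec{p}=(p_1,\dots,p_n)$ with $1<\vec{p}<\infty$ and $-\frac{1}{n}\sum_{i=1}^n\frac{1}{p_i}<\lambda<0$. There is a constant $C>0$ such that for every $b\in\mathfrak{C}^{\vec{p},\lambda}(\mathbb{R}^n)$, all $j,k\in\mathbb{Z}$ and all $y\in\mathbb{R}^n$, $$|b(y)-b_{B_k}|\le|b(y)-b_{B_j}|+C\max\{|B_k|^{\lambda},|B_j|^{\lambda}\}\,\|b\|_{\mathfrak{C}^{\vec{p},\lambda}(\mathbb{R}^n)}.$$
   Context: $B_k=\{x\in\mathbb{R}^n:|x|\le2^k\}$ for $k\in\mathbb{Z}$, and $b_{B}=\frac1{|B|}\int_B b$. For an exponent vector $\vec{p}$, $\|\cdot\|_{L^{\vec p}}$ denotes the mixed Lebesgue norm $\|f\|_{L^{\vec{p}}}=\Big(\int_{\mathbb{R}}\cdots\Big(\int_{\mathbb{R}}|f(x_1,\dots,x_n)|^{p_1}dx_1\Big)^{p_2/p_1}\cdots dx_n\Big)^{1/p_n}$. The mixed central Campanato space $\mathfrak{C}^{\vec{p},\lambda}(\mathbb{R}^n)$ consists of measurable $f$ with $\|f\|_{\mathfrak{C}^{\vec{p},\lambda}}=\sup_{r>0}\frac{\|(f-f_{B(0,r)})\chi_{B(0,r)}\|_{L^{\vec p}}}{|B(0,r)|^{\lambda}\|\chi_{B(0,r)}\|_{L^{\vec p}}}<\infty$, where $\chi_B$ is the indicator of $B$. *)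

theory Defs
  imports "HOL-Analysis.Analysis"
begin

text \<open>Points of R^n are represented as functions nat => real that are extensional on {..<n},
  i.e. elements of PiE {..<n} (%_. UNIV); coordinate x_{i+1} of the paper is x i.\<close>

definition Rn :: "nat \<Rightarrow> (nat \<Rightarrow> real) set" where
  "Rn n = PiE {..<n} (\<lambda>_. UNIV)"

definition lebn :: "nat \<Rightarrow> (nat \<Rightarrow> real) measure" where
  "lebn n = PiM {..<n} (\<lambda>_. lborel)"

definition enorm :: "nat \<Rightarrow> (nat \<Rightarrow> real) \<Rightarrow> real" where
  "enorm n x = sqrt (\<Sum>i<n. (x i)\<^sup>2)"

definition ballR :: "nat \<Rightarrow> real \<Rightarrow> (nat \<Rightarrow> real) set" where
  "ballR n r = {x \<in> Rn n. enorm n x \<le> r}"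

definition Bk :: "nat \<Rightarrow> int \<Rightarrow> (nat \<Rightarrow> real) set" where
  "Bk n k = ballR n (2 powr real_of_int k)"

definition vol :: "nat \<Rightarrow> (nat \<Rightarrow> real) set \<Rightarrow> real" where
  "vol n B = measure (lebn n) B"

definition avg :: "nat \<Rightarrow> ((nat \<Rightarrow> real) \<Rightarrow> real) \<Rightarrow> (nat \<Rightarrow> real) set \<Rightarrow> real" where
  "avg n b B = (1 / vol n B) * (\<integral>x\<in>B. b x \<partial>lebn n)"

definition enn_powr :: "ennreal \<Rightarrow> real \<Rightarrow> ennreal" where
  "enn_powr e a = (if e = \<infinity> then \<infinity> else ennreal (enn2real e powr a))"

text \<open>Iterated mixed integration: stage 0 is |f x|; stage i+1 takes the L^{p_{i+1}} norm
  in the coordinate x_{i+1} (index i).\<close>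
fun mixed_aux :: "(nat \<Rightarrow> real) \<Rightarrow> ((nat \<Rightarrow> real) \<Rightarrow> real) \<Rightarrow> nat \<Rightarrow> (nat \<Rightarrow> real) \<Rightarrow> ennreal" where
  "mixed_aux p f 0 x = ennreal \<bar>f x\<bar>"
| "mixed_aux p f (Suc i) x =
     enn_powr (\<integral>\<^sup>+ t. enn_powr (mixed_aux p f i (x(i := t))) (p i) \<partial>lborel) (1 / p i)"

definition mixed_norm :: "nat \<Rightarrow> (nat \<Rightarrow> real) \<Rightarrow> ((nat \<Rightarrow> real) \<Rightarrow> real) \<Rightarrow> ennreal" where
  "mixed_norm n p f = mixed_aux p f n (\<lambda>_. undefined)"

definition campanato_norm :: "nat \<Rightarrow> (nat \<Rightarrow> real) \<Rightarrow> real \<Rightarrow> ((nat \<Rightarrow> real) \<Rightarrow> real) \<Rightarrow> ennreal" where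
  "campanato_norm n p lam f =
     (SUP r \<in> {0<..}. mixed_norm n p (\<lambda>x. (f x - avg n f (ballR n r)) * indicator (ballR n r) x)
        / (ennreal (vol n (ballR n r) powr lam) * mixed_norm n p (indicator (ballR n r))))"

definition campanato :: "nat \<Rightarrow> (nat \<Rightarrow> real) \<Rightarrow> real \<Rightarrow> ((nat \<Rightarrow> real) \<Rightarrow> real) set" where
  "campanato n p lam = {f. f \<in> borel_measurable (lebn n) \<and> campanato_norm n p lam f < \<infinity>}"

end

theory Submission
  imports Defs
begin

text \<open>Coordinatewise Holder inequalities bound \<open>\<integral>\<^sub>B |b - b\<^sub>B|\<close> by the mixed norm of
  \<open>(b - b\<^sub>B) \<chi>\<^sub>B\<close> times \<open>\<Prod>\<^sub>i (2r)\<^bsup>1 - 1/p\<^sub>i\<^esup>\<close>, and the mixed norm of \<open>\<chi>\<^sub>B\<close> by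
  \<open>\<Prod>\<^sub>i (2r)\<^bsup>1/p\<^sub>i\<^esup>\<close>; hence the Campanato condition gives the mean oscillation bound
  \<open>\<integral>\<^sub>B |b - b\<^sub>B| \<le> \<parallel>b\<parallel> |B|\<^sup>\<lambda> (2r)\<^sup>n\<close> for \<open>B = B(0,r)\<close>.
  Averaging over \<open>B\<^sub>i \<subseteq> B\<^sub>i\<^sub>+\<^sub>1\<close> then gives \<open>|b\<^bsub>B\<^sub>i\<^esub> - b\<^bsub>B\<^sub>i\<^sub>+\<^sub>1\<^esub>| \<le> C \<parallel>b\<parallel> 2\<^bsup>i n \<lambda>\<^esup>\<close>.
  As \<open>\<lambda> < 0\<close> these differences form a geometric series, so \<open>|b\<^bsub>B\<^sub>j\<^esub> - b\<^bsub>B\<^sub>k\<^esub>|\<close> is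
  dominated by its first term, which is comparable to \<open>|B\<^bsub>min j k\<^esub>|\<^sup>\<lambda>\<close>; the claim is the
  triangle inequality through \<open>b\<^bsub>B\<^sub>j\<^esub>\<close>.\<close>

subsection \<open>Coordinate updates and measurability\<close>

lemma product_sigma_finite_lborel: "product_sigma_finite (\<lambda>_::nat. lborel)"
  by (simp add: product_sigma_finite_def lborel.sigma_finite_measure_axioms)

lemma space_lebn: "space (lebn n) = Rn n"
  by (simp add: lebn_def Rn_def space_PiM)

lemma fun_upd_in_Rn: "x \<in> Rn n \<Longrightarrow> i < n \<Longrightarrow> x(i := t) \<in> Rn n"
  by (auto simp: Rn_def PiE_def extensional_def)

lemma undefined_in_Rn: "(\<lambda>_. undefined) \<in> Rn n"
  by (auto simp: Rn_def PiE_def extensional_def)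

lemma measurable_fun_upd_lebn:
  "i < n \<Longrightarrow> (\<lambda>(x, t). x(i := t)) \<in> measurable (lebn n \<Otimes>\<^sub>M lborel) (lebn n)"
  using measurable_add_dim[of i "{..<n}" "\<lambda>_. lborel"] by (simp add: lebn_def insert_absorb)

lemma measurable_fun_upd_lebn_point:
  "x \<in> Rn n \<Longrightarrow> i < n \<Longrightarrow> (\<lambda>t. x(i := t)) \<in> measurable lborel (lebn n)"
  unfolding lebn_def
  by (intro measurable_fun_upd[where J = "{..<n}"]) (auto simp: Rn_def space_PiM)

lemma enn_powr_ennreal: "0 \<le> x \<Longrightarrow> enn_powr (ennreal x) e = ennreal (x powr e)"
  by (simp add: enn_powr_def)

lemma enn_powr_zero [simp]: "enn_powr 0 e = 0"
  by (simp add: enn_powr_def)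

lemma enn_powr_mono: "a \<le> b \<Longrightarrow> 0 \<le> e \<Longrightarrow> enn_powr a e \<le> enn_powr b e"
proof (cases "b = \<infinity>")
  case False
  assume ab: "a \<le> b" and e: "0 \<le> e"
  obtain y where y: "b = ennreal y" "0 \<le> y" using False by (cases b) auto
  obtain x where x: "a = ennreal x" "0 \<le> x" using ab y by (cases a) (auto simp: top_unique)
  have "x \<le> y" using ab x y by simp
  then show ?thesis using x y e by (simp add: enn_powr_ennreal powr_mono2)
qed (simp add: enn_powr_def)

lemma borel_measurable_enn_powr [measurable]:
  assumes "f \<in> borel_measurable M"
  shows "(\<lambda>x. enn_powr (f x) a) \<in> borel_measurable M"
proof -
  have "(\<lambda>e. enn_powr e a) \<in> borel_measurable borel"
    unfolding enn_powr_def by measurable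
  from measurable_compose[OF assms this] show ?thesis .
qed

lemma borel_measurable_mixed_aux:
  assumes f: "f \<in> borel_measurable (lebn n)"
  shows "i \<le> n \<Longrightarrow> mixed_aux p f i \<in> borel_measurable (lebn n)"
proof (induction i)
  case 0
  then show ?case using f by simp
next
  case (Suc i)
  then have i: "i < n" and IH: "mixed_aux p f i \<in> borel_measurable (lebn n)" by auto
  have "(\<lambda>(x, t). enn_powr (mixed_aux p f i (x(i := t))) (p i)) \<in> borel_measurable (lebn n \<Otimes>\<^sub>M lborel)"
    using measurable_compose[OF measurable_fun_upd_lebn[OF i] IH] by (simp add: case_prod_beta')
  then have "(\<lambda>x. \<integral>\<^sup>+ t. enn_powr (mixed_aux p f i (x(i := t))) (p i) \<partial>lborel) \<in> borel_measurable (lebn n)"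
    by (intro lborel.borel_measurable_nn_integral) (simp add: case_prod_beta')
  then show ?case by simp
qed

subsection \<open>Holder's inequality on a set of finite measure\<close>

text \<open>Holder's inequality is obtained from Young's inequality applied to \<open>h / s\<close>, optimised
  over the scale \<open>s\<close>.\<close>

lemma Youngs_inequality_scaled:
  fixes h s p :: real
  assumes "0 \<le> h" "0 < s" "1 < p"
  shows "h \<le> h powr p / (p * s powr (p - 1)) + s * (1 - 1 / p)"
proof -
  define q where "q = p / (p - 1)"
  have q1: "q > 1" and pq: "1 / p + 1 / q = 1"
    using assms by (auto simp: q_def field_simps)
  have "h / s * 1 \<le> (h / s) powr p / p + 1 powr q / q"
    using Youngs_inequality[of p q "h / s" 1] assms q1 pq by simp
  also have "1 powr q / q = 1 - 1 / p" using pq by simp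
  also have "(h / s) powr p = h powr p / s powr p" using assms by (simp add: powr_divide)
  finally have *: "h / s \<le> h powr p / s powr p / p + (1 - 1 / p)" by simp
  have sp: "s powr p = s * s powr (p - 1)"
    using assms by (simp add: powr_diff)
  have "h = s * (h / s)" using assms by simp
  also have "\<dots> \<le> s * (h powr p / s powr p / p + (1 - 1 / p))"
    using * assms by (intro mult_left_mono) auto
  also have "\<dots> = h powr p / (p * s powr (p - 1)) + s * (1 - 1 / p)"
    using assms by (simp add: sp field_simps)
  finally show ?thesis .
qed

lemma ennreal_Youngs_inequality_scaled:
  fixes h :: ennreal and s p :: real
  assumes "0 < s" "1 < p"
  shows "h \<le> ennreal (1 / (p * s powr (p - 1))) * enn_powr h p + ennreal (s * (1 - 1 / p))"
proof (cases "h = \<infinity>")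
  case True
  then show ?thesis using assms by (simp add: enn_powr_def ennreal_mult_top)
next
  case False
  then obtain r where r: "h = ennreal r" "0 \<le> r" by (cases h) auto
  have "r \<le> 1 / (p * s powr (p - 1)) * r powr p + s * (1 - 1 / p)"
    using Youngs_inequality_scaled[OF r(2) assms] by simp
  then have "ennreal r \<le> ennreal (1 / (p * s powr (p - 1)) * r powr p + s * (1 - 1 / p))"
    by (rule ennreal_leI)
  also have "\<dots> = ennreal (1 / (p * s powr (p - 1))) * ennreal (r powr p) + ennreal (s * (1 - 1 / p))"
  proof -
    have "0 \<le> 1 / (p * s powr (p - 1))" "0 \<le> s * (1 - 1 / p)" using assms by auto
    then show ?thesis by (simp only: ennreal_plus ennreal_mult mult_nonneg_nonneg powr_ge_zero)
  qed
  finally show ?thesis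
    using r by (simp add: enn_powr_def)
qed

lemma Youngs_scaled_optimum:
  fixes a L p s :: real
  assumes "0 < a" "0 < L" "1 < p" and s: "s = (a / L) powr (1 / p)"
  shows "1 / (p * s powr (p - 1)) * a + s * (1 - 1 / p) * L = L powr (1 - 1 / p) * a powr (1 / p)"
proof -
  define u where "u = a powr (1 / p)"
  define w where "w = L powr (1 / p)"
  have u: "u > 0" "a = u * u powr (p - 1)"
    using assms by (auto simp: u_def powr_powr powr_diff)
  have w: "w > 0" "L = w * w powr (p - 1)"
    using assms by (auto simp: w_def powr_powr powr_diff)
  have s_uw: "s = u / w" using assms by (simp add: s u_def w_def powr_divide)
  then have "s powr (p - 1) = u powr (p - 1) / w powr (p - 1)"
    using u w by (simp add: powr_divide)
  then have "1 / (p * s powr (p - 1)) * a + s * (1 - 1 / p) * L = u * w powr (p - 1)"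
    using u w assms(3) by (simp add: s_uw field_simps)
  also have "w powr (p - 1) = L powr (1 - 1 / p)"
    using assms by (simp add: w_def powr_powr field_simps)
  finally show ?thesis by (simp add: u_def)
qed

lemma nn_integral_indicator_le_Youngs:
  assumes h: "h \<in> borel_measurable M" and A: "A \<in> sets M" and p: "1 < p" and s: "0 < s"
  shows "(\<integral>\<^sup>+ t. indicator A t * h t \<partial>M)
    \<le> ennreal (1 / (p * s powr (p - 1))) * (\<integral>\<^sup>+ t. enn_powr (h t) p \<partial>M)
       + ennreal (s * (1 - 1 / p)) * emeasure M A"
proof -
  have "(\<integral>\<^sup>+ t. indicator A t * h t \<partial>M)
      \<le> (\<integral>\<^sup>+ t. ennreal (1 / (p * s powr (p - 1))) * enn_powr (h t) p
                + ennreal (s * (1 - 1 / p)) * indicator A t \<partial>M)"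
    using ennreal_Youngs_inequality_scaled[OF s p]
    by (intro nn_integral_mono) (auto simp: indicator_def)
  also have "\<dots> = ennreal (1 / (p * s powr (p - 1))) * (\<integral>\<^sup>+ t. enn_powr (h t) p \<partial>M)
       + ennreal (s * (1 - 1 / p)) * emeasure M A"
    using h A by (simp add: nn_integral_add nn_integral_cmult)
  finally show ?thesis .
qed

lemma nn_integral_indicator_eq_0_if_Lp_eq_0:
  assumes h: "h \<in> borel_measurable M" and p: "1 < p"
    and A: "A \<in> sets M" "emeasure M A = ennreal L" "0 < L"
    and H: "(\<integral>\<^sup>+ t. enn_powr (h t) p \<partial>M) = 0"
  shows "(\<integral>\<^sup>+ t. indicator A t * h t \<partial>M) = 0"
    (is "?I = 0")
proof -
  have "?I \<le> 0 + ennreal e" if e: "0 < e" for e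
  proof -
    define s where "s = e / ((1 - 1 / p) * L)"
    have s: "0 < s" using e p A(3) by (simp add: s_def)
    have "?I \<le> ennreal (s * (1 - 1 / p)) * ennreal L"
      using nn_integral_indicator_le_Youngs[OF h A(1) p s] A(2) H by simp
    also have "\<dots> = ennreal (s * (1 - 1 / p) * L)"
      using s p A(3) by (simp add: ennreal_mult)
    also have "s * (1 - 1 / p) * L = e"
      using p A(3) by (simp add: s_def field_simps)
    finally show ?thesis by simp
  qed
  then have "?I \<le> 0" by (rule ennreal_le_epsilon)
  then show ?thesis by simp
qed

lemma Holder_nn_integral_indicator:
  assumes h: "h \<in> borel_measurable M" and p: "1 < p"
    and A: "A \<in> sets M" "emeasure M A = ennreal L" "0 < L"
  shows "(\<integral>\<^sup>+ t. indicator A t * h t \<partial>M)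
    \<le> ennreal (L powr (1 - 1 / p)) * enn_powr (\<integral>\<^sup>+ t. enn_powr (h t) p \<partial>M) (1 / p)"
    (is "?I \<le> _")
proof -
  define H where "H = (\<integral>\<^sup>+ t. enn_powr (h t) p \<partial>M)"
  consider "H = \<infinity>" | "H = 0" | a where "H = ennreal a" "0 < a"
    by (cases H) (auto simp: less_le)
  then show ?thesis
  proof cases
    case 1
    then show ?thesis using A(3) by (simp add: H_def enn_powr_def ennreal_mult_top)
  next
    case 2
    then show ?thesis using nn_integral_indicator_eq_0_if_Lp_eq_0[OF h p A] by (simp add: H_def)
  next
    case (3 a)
    define s where "s = (a / L) powr (1 / p)"
    have s: "0 < s" using 3 A(3) by (simp add: s_def)
    have "0 \<le> 1 / (p * s powr (p - 1))" "0 \<le> s * (1 - 1 / p)" using s p by auto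
    then have "?I \<le> ennreal (1 / (p * s powr (p - 1)) * a + s * (1 - 1 / p) * L)"
      using nn_integral_indicator_le_Youngs[OF h A(1) p s, folded H_def] 3 A(2,3)
      by (simp only: ennreal_plus ennreal_mult mult_nonneg_nonneg less_imp_le)
    also have "\<dots> = ennreal (L powr (1 - 1 / p)) * enn_powr H (1 / p)"
      using Youngs_scaled_optimum[OF 3(2) A(3) p s_def] 3 by (simp add: enn_powr_def ennreal_mult)
    finally show ?thesis by (simp add: H_def)
  qed
qed

subsection \<open>Holder's inequality for mixed norms on cubes\<close>

definition partial_nn_integral ::
    "((nat \<Rightarrow> real) \<Rightarrow> ennreal) \<Rightarrow> nat \<Rightarrow> (nat \<Rightarrow> real) \<Rightarrow> ennreal" where
  "partial_nn_integral F i x =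
     (\<integral>\<^sup>+ z. F (\<lambda>l. if l < i then z l else x l) \<partial>PiM {..<i} (\<lambda>_. lborel))"

lemma measurable_prefix_override_lebn:
  assumes x: "x \<in> Rn n" and i: "i \<le> n"
  shows "(\<lambda>z l. if l < i then z l else x l) \<in> measurable (PiM {..<i} (\<lambda>_. lborel)) (lebn n)"
  unfolding lebn_def
proof (rule measurable_PiM_single')
  fix l
  show "(\<lambda>z. if l < i then z l else x l) \<in> measurable (PiM {..<i} (\<lambda>_. lborel)) lborel"
    by (cases "l < i") simp_all
next
  show "(\<lambda>z l. if l < i then z l else x l) \<in> space (PiM {..<i} (\<lambda>_. lborel)) \<rightarrow> (\<Pi>\<^sub>E l\<in>{..<n}. space lborel)"
    using x i by (auto simp: Rn_def PiE_def extensional_def)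
qed

lemma partial_nn_integral_0: "partial_nn_integral F 0 x = F x"
  by (simp add: partial_nn_integral_def PiM_empty nn_integral_count_space_finite)

lemma partial_nn_integral_Suc:
  assumes F: "F \<in> borel_measurable (lebn n)" and i: "i < n" and x: "x \<in> Rn n"
  shows "partial_nn_integral F (Suc i) x = (\<integral>\<^sup>+ t. partial_nn_integral F i (x(i := t)) \<partial>lborel)"
proof -
  interpret product_sigma_finite "\<lambda>_::nat. lborel" by (rule product_sigma_finite_lborel)
  have ins: "{..<Suc i} = insert i {..<i}" by auto
  have F': "(\<lambda>z. F (\<lambda>l. if l < Suc i then z l else x l)) \<in> borel_measurable (PiM (insert i {..<i}) (\<lambda>_. lborel))"
    using measurable_compose[OF measurable_prefix_override_lebn[OF x, of "Suc i"] F] i by (simp add: ins)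
  have "partial_nn_integral F (Suc i) x =
      (\<integral>\<^sup>+ t. (\<integral>\<^sup>+ z. F (\<lambda>l. if l < Suc i then (z(i := t)) l else x l) \<partial>PiM {..<i} (\<lambda>_. lborel)) \<partial>lborel)"
    unfolding partial_nn_integral_def ins by (rule product_nn_integral_insert_rev[OF _ _ F']) auto
  also have "(\<lambda>z t l. if l < Suc i then (z(i := t)) l else x l) = (\<lambda>z t l. if l < i then z l else (x(i := t)) l)"
    by (auto simp: fun_eq_iff)
  finally show ?thesis by (simp add: partial_nn_integral_def)
qed

lemma partial_nn_integral_all: "partial_nn_integral F n (\<lambda>_. undefined) = (\<integral>\<^sup>+ x. F x \<partial>lebn n)"
  unfolding partial_nn_integral_def lebn_def
proof (rule nn_integral_cong)
  fix z :: "nat \<Rightarrow> real" assume "z \<in> space (PiM {..<n} (\<lambda>_. lborel))"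
  then have "(\<lambda>l. if l < n then z l else undefined) = z"
    by (auto simp: space_PiM PiE_def extensional_def fun_eq_iff)
  then show "F (\<lambda>l. if l < n then z l else undefined) = F z" by simp
qed

text \<open>Holder's inequality in each coordinate, applied inside the Tonelli iteration.\<close>

lemma partial_nn_integral_le_mixed_aux:
  assumes f: "f \<in> borel_measurable (lebn n)" and R: "0 < R" and p: "\<forall>i<n. 1 < p i"
    and supp: "\<And>y l. l < n \<Longrightarrow> R < \<bar>y l\<bar> \<Longrightarrow> f y = 0"
  shows "i \<le> n \<Longrightarrow> x \<in> Rn n \<Longrightarrow>
    partial_nn_integral (\<lambda>y. ennreal \<bar>f y\<bar>) i x \<le> ennreal (\<Prod>l<i. (2 * R) powr (1 - 1 / p l)) * mixed_aux p f i x"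
proof (induction i arbitrary: x)
  case 0
  then show ?case by (simp add: partial_nn_integral_0)
next
  case (Suc i)
  have i: "i < n" and x: "x \<in> Rn n" using Suc.prems by auto
  define c where "c = (\<Prod>l<i. (2 * R) powr (1 - 1 / p l))"
  have c: "0 \<le> c" unfolding c_def by (simp add: prod_nonneg)
  have h: "(\<lambda>t. mixed_aux p f i (x(i := t))) \<in> borel_measurable lborel"
    using measurable_compose[OF measurable_fun_upd_lebn_point[OF x i] borel_measurable_mixed_aux[OF f]] i
    by simp
  have "partial_nn_integral (\<lambda>y. ennreal \<bar>f y\<bar>) (Suc i) x
      = (\<integral>\<^sup>+ t. partial_nn_integral (\<lambda>y. ennreal \<bar>f y\<bar>) i (x(i := t)) \<partial>lborel)"
    using f i x by (intro partial_nn_integral_Suc) measurable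
  also have "\<dots> \<le> (\<integral>\<^sup>+ t. ennreal c * (indicator {-R..R} t * mixed_aux p f i (x(i := t))) \<partial>lborel)"
  proof (rule nn_integral_mono)
    fix t
    show "partial_nn_integral (\<lambda>y. ennreal \<bar>f y\<bar>) i (x(i := t))
        \<le> ennreal c * (indicator {-R..R} t * mixed_aux p f i (x(i := t)))"
    proof (cases "t \<in> {-R..R}")
      case True
      have "partial_nn_integral (\<lambda>y. ennreal \<bar>f y\<bar>) i (x(i := t)) \<le> ennreal c * mixed_aux p f i (x(i := t))"
        unfolding c_def using i by (intro Suc.IH[OF _ fun_upd_in_Rn[OF x i]]) simp
      then show ?thesis using True by simp
    next
      case False
      then have "R < \<bar>t\<bar>" by auto
      then have "partial_nn_integral (\<lambda>y. ennreal \<bar>f y\<bar>) i (x(i := t)) = 0"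
        unfolding partial_nn_integral_def using supp[of i] i by simp
      then show ?thesis by simp
    qed
  qed
  also have "\<dots> = ennreal c * (\<integral>\<^sup>+ t. indicator {-R..R} t * mixed_aux p f i (x(i := t)) \<partial>lborel)"
    using h by (intro nn_integral_cmult borel_measurable_times_ennreal) auto
  also have "\<dots> \<le> ennreal c * (ennreal ((2 * R) powr (1 - 1 / p i)) *
        enn_powr (\<integral>\<^sup>+ t. enn_powr (mixed_aux p f i (x(i := t))) (p i) \<partial>lborel) (1 / p i))"
    using Holder_nn_integral_indicator[OF h, of "p i" "{-R..R}" "2 * R"] p i R
    by (intro mult_left_mono) auto
  also have "\<dots> = ennreal (\<Prod>l<Suc i. (2 * R) powr (1 - 1 / p l)) * mixed_aux p f (Suc i) x"
    using c by (simp add: c_def ennreal_mult mult.assoc)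
  finally show ?case .
qed

lemma nn_integral_le_mixed_norm:
  assumes f: "f \<in> borel_measurable (lebn n)" and R: "0 < R" and p: "\<forall>i<n. 1 < p i"
    and supp: "\<And>y l. l < n \<Longrightarrow> R < \<bar>y l\<bar> \<Longrightarrow> f y = 0"
  shows "(\<integral>\<^sup>+ x. ennreal \<bar>f x\<bar> \<partial>lebn n) \<le> ennreal (\<Prod>l<n. (2 * R) powr (1 - 1 / p l)) * mixed_norm n p f"
  using partial_nn_integral_le_mixed_aux[OF assms order.refl undefined_in_Rn]
  by (simp add: partial_nn_integral_all mixed_norm_def)

lemma mixed_aux_eq_0_outside_cube:
  assumes supp: "\<And>y l. l < n \<Longrightarrow> R < \<bar>y l\<bar> \<Longrightarrow> f y = 0"
  shows "i \<le> l \<Longrightarrow> l < n \<Longrightarrow> R < \<bar>x l\<bar> \<Longrightarrow> mixed_aux p f i x = 0"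
proof (induction i arbitrary: x)
  case 0
  then show ?case using supp by simp
next
  case (Suc i)
  then have "mixed_aux p f i (x(i := t)) = 0" for t by simp
  then show ?case by simp
qed

lemma mixed_aux_indicator_le:
  assumes R: "0 < R" and p: "\<forall>i<n. 1 < p i"
    and B: "\<And>y l. y \<in> B \<Longrightarrow> l < n \<Longrightarrow> \<bar>y l\<bar> \<le> R"
  shows "i \<le> n \<Longrightarrow> mixed_aux p (indicator B) i x \<le> ennreal (\<Prod>l<i. (2 * R) powr (1 / p l))"
proof (induction i arbitrary: x)
  case 0
  then show ?case by (simp add: indicator_def)
next
  case (Suc i)
  have i: "i < n" and pi: "1 < p i" using Suc.prems p by auto
  define c where "c = (\<Prod>l<i. (2 * R) powr (1 / p l))"
  have c: "0 < c" unfolding c_def using R by (simp add: prod_pos)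
  have "(\<integral>\<^sup>+ t. enn_powr (mixed_aux p (indicator B) i (x(i := t))) (p i) \<partial>lborel)
      \<le> (\<integral>\<^sup>+ t. ennreal (c powr p i) * indicator {-R..R} t \<partial>lborel)"
  proof (rule nn_integral_mono)
    fix t
    show "enn_powr (mixed_aux p (indicator B) i (x(i := t))) (p i) \<le> ennreal (c powr p i) * indicator {-R..R} t"
    proof (cases "t \<in> {-R..R}")
      case True
      have "mixed_aux p (indicator B) i (x(i := t)) \<le> ennreal c"
        unfolding c_def using i by (intro Suc.IH) simp
      then have "enn_powr (mixed_aux p (indicator B) i (x(i := t))) (p i) \<le> enn_powr (ennreal c) (p i)"
        using pi by (intro enn_powr_mono) auto
      then show ?thesis using True c by (simp add: enn_powr_ennreal)
    next
      case False
      have "\<And>y l. l < n \<Longrightarrow> R < \<bar>y l\<bar> \<Longrightarrow> indicator B y = (0::real)"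
        using B by (force simp: indicator_def)
      then have "mixed_aux p (indicator B) i (x(i := t)) = 0"
        using False i by (intro mixed_aux_eq_0_outside_cube[of n R _ i i]) auto
      then show ?thesis by simp
    qed
  qed
  also have "\<dots> = ennreal (c powr p i * (2 * R))"
    using R c by (simp add: nn_integral_cmult ennreal_mult)
  finally have "mixed_aux p (indicator B) (Suc i) x \<le> enn_powr (ennreal (c powr p i * (2 * R))) (1 / p i)"
    using pi by (simp add: enn_powr_mono)
  also have "\<dots> = ennreal (c * (2 * R) powr (1 / p i))"
    using c R pi by (simp add: enn_powr_ennreal powr_mult powr_powr)
  finally show ?case by (simp add: c_def)
qed

lemma mixed_norm_indicator_le:
  assumes "0 < R" "\<forall>i<n. 1 < p i" "\<And>y l. y \<in> B \<Longrightarrow> l < n \<Longrightarrow> \<bar>y l\<bar> \<le> R"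
  shows "mixed_norm n p (indicator B) \<le> ennreal (\<Prod>l<n. (2 * R) powr (1 / p l))"
  unfolding mixed_norm_def using mixed_aux_indicator_le[of R n p B n] assms by simp

subsection \<open>Balls and their volumes\<close>

lemma abs_le_enorm: "l < n \<Longrightarrow> \<bar>x l\<bar> \<le> enorm n x"
proof -
  assume "l < n"
  then have "(x l)\<^sup>2 \<le> (\<Sum>i<n. (x i)\<^sup>2)" by (intro member_le_sum) auto
  then have "sqrt ((x l)\<^sup>2) \<le> sqrt (\<Sum>i<n. (x i)\<^sup>2)" by (rule real_sqrt_le_mono)
  then show ?thesis by (simp add: enorm_def)
qed

lemma ballR_abs_le: "y \<in> ballR n r \<Longrightarrow> l < n \<Longrightarrow> \<bar>y l\<bar> \<le> r"
  using abs_le_enorm[of l n y] by (auto simp: ballR_def)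

lemma ballR_mono: "r \<le> s \<Longrightarrow> ballR n r \<subseteq> ballR n s"
  by (auto simp: ballR_def)

lemma ballR_sets: "ballR n r \<in> sets (lebn n)"
proof -
  have "(\<lambda>x. \<Sum>i<n. (x i)\<^sup>2) \<in> borel_measurable (lebn n)"
    unfolding lebn_def by measurable
  then have "(\<lambda>x. enorm n x) \<in> borel_measurable (lebn n)"
    unfolding enorm_def by measurable
  moreover have "ballR n r = {x \<in> space (lebn n). enorm n x \<le> r}"
    by (simp add: ballR_def space_lebn)
  ultimately show ?thesis by (simp add: borel_measurable_iff_le)
qed

definition cube :: "nat \<Rightarrow> real \<Rightarrow> (nat \<Rightarrow> real) set" where
  "cube n a = PiE {..<n} (\<lambda>_. {-a..a})"

lemma cube_sets: "cube n a \<in> sets (lebn n)"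
  unfolding cube_def lebn_def by (rule sets_PiM_I_finite) auto

lemma emeasure_cube: "0 \<le> a \<Longrightarrow> emeasure (lebn n) (cube n a) = ennreal ((2 * a) ^ n)"
proof -
  assume a: "0 \<le> a"
  interpret product_sigma_finite "\<lambda>_::nat. lborel" by (rule product_sigma_finite_lborel)
  have "emeasure (lebn n) (cube n a) = (\<Prod>i<n. emeasure lborel {-a..a})"
    unfolding lebn_def cube_def by (rule emeasure_PiM) auto
  then show ?thesis using a by (simp add: ennreal_power)
qed

lemma ballR_subset_cube: "ballR n r \<subseteq> cube n r"
proof
  fix y assume y: "y \<in> ballR n r"
  then have "\<forall>l<n. \<bar>y l\<bar> \<le> r" using ballR_abs_le by blast
  then show "y \<in> cube n r" using y by (auto simp: cube_def ballR_def Rn_def PiE_def abs_le_iff)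
qed

lemma cube_subset_ballR:
  assumes n: "1 \<le> n" and r: "0 \<le> r"
  shows "cube n (r / sqrt n) \<subseteq> ballR n r"
proof
  fix y assume y: "y \<in> cube n (r / sqrt n)"
  have "(\<Sum>i<n. (y i)\<^sup>2) \<le> (\<Sum>i<n. (r / sqrt n)\<^sup>2)"
  proof (rule sum_mono)
    fix i assume "i \<in> {..<n}"
    then have "\<bar>y i\<bar> \<le> \<bar>r / sqrt n\<bar>" using y r by (auto simp: cube_def PiE_def Pi_def abs_le_iff)
    then show "(y i)\<^sup>2 \<le> (r / sqrt n)\<^sup>2" by (simp only: abs_le_square_iff)
  qed
  also have "\<dots> = r\<^sup>2" using n by (simp add: power_divide)
  finally have "sqrt (\<Sum>i<n. (y i)\<^sup>2) \<le> sqrt (r\<^sup>2)" by (rule real_sqrt_le_mono)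
  then have "enorm n y \<le> r" using r by (simp add: enorm_def)
  moreover have "y \<in> Rn n" using y by (auto simp: cube_def Rn_def PiE_def)
  ultimately show "y \<in> ballR n r" by (simp add: ballR_def)
qed

lemma vol_ballR_bounds:
  assumes n: "1 \<le> n" and r: "0 < r"
  shows "(2 * r / sqrt n) ^ n \<le> vol n (ballR n r)" and "vol n (ballR n r) \<le> (2 * r) ^ n"
proof -
  have "emeasure (lebn n) (ballR n r) \<le> emeasure (lebn n) (cube n r)"
    by (rule emeasure_mono[OF ballR_subset_cube cube_sets])
  also have "\<dots> = ennreal ((2 * r) ^ n)" using r by (intro emeasure_cube) simp
  finally have upper: "emeasure (lebn n) (ballR n r) \<le> ennreal ((2 * r) ^ n)" .
  then have "emeasure (lebn n) (ballR n r) \<noteq> \<infinity>" by (auto simp: top_unique)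
  then have eq: "emeasure (lebn n) (ballR n r) = ennreal (vol n (ballR n r))"
    by (simp add: vol_def emeasure_eq_ennreal_measure)
  show "vol n (ballR n r) \<le> (2 * r) ^ n"
    using upper r by (simp add: eq ennreal_le_iff)
  have "ennreal ((2 * (r / sqrt n)) ^ n) = emeasure (lebn n) (cube n (r / sqrt n))"
    using r by (intro emeasure_cube[symmetric]) simp
  also have "\<dots> \<le> emeasure (lebn n) (ballR n r)"
    using r by (intro emeasure_mono[OF cube_subset_ballR[OF n] ballR_sets]) simp
  finally show "(2 * r / sqrt n) ^ n \<le> vol n (ballR n r)"
    using r by (simp add: eq ennreal_le_iff vol_def)
qed

lemma vol_ballR_pos: "1 \<le> n \<Longrightarrow> 0 < r \<Longrightarrow> 0 < vol n (ballR n r)"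
proof -
  assume n: "1 \<le> n" and r: "0 < r"
  have "0 < (2 * r / sqrt n) ^ n" using n r by simp
  also have "\<dots> \<le> vol n (ballR n r)" by (rule vol_ballR_bounds(1)[OF n r])
  finally show ?thesis .
qed

lemma vol_ballR_powr_bounds:
  assumes n: "1 \<le> n" and r: "0 < r" and lam: "lam \<le> 0"
  shows "(2 * r) powr (n * lam) \<le> vol n (ballR n r) powr lam"
    and "vol n (ballR n r) powr lam \<le> (2 * r / sqrt n) powr (n * lam)"
proof -
  have pow_powr: "(c ^ n) powr lam = c powr (n * lam)" if "0 < c" for c :: real
    using that by (simp add: powr_realpow[symmetric] powr_powr)
  have "(2 * r) powr (n * lam) = ((2 * r) ^ n) powr lam"
    using r by (intro pow_powr[symmetric]) simp
  also have "\<dots> \<le> vol n (ballR n r) powr lam"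
    by (rule powr_mono2'[OF lam vol_ballR_pos[OF n r] vol_ballR_bounds(2)[OF n r]])
  finally show "(2 * r) powr (n * lam) \<le> vol n (ballR n r) powr lam" .
  have "vol n (ballR n r) powr lam \<le> ((2 * r / sqrt n) ^ n) powr lam"
    using n r by (intro powr_mono2'[OF lam _ vol_ballR_bounds(1)[OF n r]]) simp
  also have "\<dots> = (2 * r / sqrt n) powr (n * lam)"
    using n r by (intro pow_powr) simp
  finally show "vol n (ballR n r) powr lam \<le> (2 * r / sqrt n) powr (n * lam)" .
qed

subsection \<open>Mean oscillation of Campanato functions\<close>

lemma ennreal_le_mult_if_divide_le:
  fixes x y c :: ennreal
  assumes "x / y \<le> c" "c < \<infinity>" "y < \<infinity>"
  shows "x \<le> c * y"
proof (cases "y = 0")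
  case True
  then show ?thesis using assms by (cases "x = 0") (auto simp: top_unique)
next
  case False
  then have "x = (x / y) * y" using assms(3) by (simp add: ennreal_divide_times)
  also have "\<dots> \<le> c * y" using assms(1) by (rule mult_right_mono) simp
  finally show ?thesis .
qed

lemma prod_powr_complement:
  fixes a :: real
  assumes "0 < a"
  shows "(\<Prod>l<n. a powr (1 - e l)) * (\<Prod>l<n. a powr e l) = a ^ n"
  using assms by (simp add: prod.distrib[symmetric] powr_add[symmetric])

lemma mixed_norm_oscillation_le_campanato_norm:
  assumes r: "0 < r" and ind: "mixed_norm n p (indicator (ballR n r)) < \<infinity>"
    and b: "campanato_norm n p lam b < \<infinity>"
  shows "mixed_norm n p (\<lambda>x. (b x - avg n b (ballR n r)) * indicator (ballR n r) x)
    \<le> campanato_norm n p lam b * (ennreal (vol n (ballR n r) powr lam) * mixed_norm n p (indicator (ballR n r)))"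
proof (rule ennreal_le_mult_if_divide_le[OF _ b])
  show "mixed_norm n p (\<lambda>x. (b x - avg n b (ballR n r)) * indicator (ballR n r) x)
      / (ennreal (vol n (ballR n r) powr lam) * mixed_norm n p (indicator (ballR n r)))
    \<le> campanato_norm n p lam b"
    unfolding campanato_norm_def using r by (intro SUP_upper) auto
  show "ennreal (vol n (ballR n r) powr lam) * mixed_norm n p (indicator (ballR n r)) < \<infinity>"
    using ind by (simp add: ennreal_mult_less_top)
qed

lemma mixed_norm_oscillation_le:
  assumes p: "\<forall>i<n. 1 < p i" and b: "b \<in> campanato n p lam" and r: "0 < r"
  shows "mixed_norm n p (\<lambda>x. (b x - avg n b (ballR n r)) * indicator (ballR n r) x)
    \<le> ennreal (enn2real (campanato_norm n p lam b) * vol n (ballR n r) powr lam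
                * (\<Prod>l<n. (2 * r) powr (1 / p l)))"
proof -
  define c where "c = (\<Prod>l<n. (2 * r) powr (1 / p l))"
  define N where "N = enn2real (campanato_norm n p lam b)"
  have c: "0 \<le> c" unfolding c_def by (simp add: prod_nonneg)
  have "campanato_norm n p lam b < \<infinity>" using b by (simp add: campanato_def)
  then have N: "campanato_norm n p lam b = ennreal N" "0 \<le> N"
    by (auto simp: N_def less_top ennreal_enn2real)
  have indicator_norm: "mixed_norm n p (indicator (ballR n r)) \<le> ennreal c"
    unfolding c_def using r p ballR_abs_le by (intro mixed_norm_indicator_le)
  then have "mixed_norm n p (indicator (ballR n r)) < \<infinity>"
    by (rule order.strict_trans1) simp
  then have "mixed_norm n p (\<lambda>x. (b x - avg n b (ballR n r)) * indicator (ballR n r) x)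
      \<le> ennreal N * (ennreal (vol n (ballR n r) powr lam) * mixed_norm n p (indicator (ballR n r)))"
    unfolding N(1)[symmetric] using r N by (intro mixed_norm_oscillation_le_campanato_norm) auto
  also have "\<dots> \<le> ennreal N * (ennreal (vol n (ballR n r) powr lam) * ennreal c)"
    using indicator_norm by (intro mult_left_mono) auto
  also have "\<dots> = ennreal (N * vol n (ballR n r) powr lam * c)"
    using N c by (simp add: ennreal_mult mult.assoc)
  finally show ?thesis by (simp add: N_def c_def)
qed

lemma campanato_mean_oscillation_le:
  assumes p: "\<forall>i<n. 1 < p i" and b: "b \<in> campanato n p lam" and r: "0 < r"
  shows "(\<integral>\<^sup>+ x. ennreal (\<bar>b x - avg n b (ballR n r)\<bar> * indicator (ballR n r) x) \<partial>lebn n)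
     \<le> ennreal (enn2real (campanato_norm n p lam b) * vol n (ballR n r) powr lam * (2 * r) ^ n)"
proof -
  define f where "f = (\<lambda>x. (b x - avg n b (ballR n r)) * indicator (ballR n r) x)"
  define c1 where "c1 = (\<Prod>l<n. (2 * r) powr (1 - 1 / p l))"
  define c2 where "c2 = (\<Prod>l<n. (2 * r) powr (1 / p l))"
  define M where "M = enn2real (campanato_norm n p lam b) * vol n (ballR n r) powr lam"
  have c: "0 \<le> c1" "0 \<le> c2" unfolding c1_def c2_def by (simp_all add: prod_nonneg)
  have M: "0 \<le> M" unfolding M_def by simp
  have "b \<in> borel_measurable (lebn n)" using b by (simp add: campanato_def)
  then have "f \<in> borel_measurable (lebn n)"
    unfolding f_def using ballR_sets by measurable
  moreover have "f y = 0" if "l < n" "r < \<bar>y l\<bar>" for y l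
    using ballR_abs_le[of y n r l] that by (auto simp: f_def indicator_def)
  ultimately have "(\<integral>\<^sup>+ x. ennreal \<bar>f x\<bar> \<partial>lebn n) \<le> ennreal c1 * mixed_norm n p f"
    unfolding c1_def by (rule nn_integral_le_mixed_norm[OF _ r p])
  also have "\<dots> \<le> ennreal c1 * ennreal (M * c2)"
    using mixed_norm_oscillation_le[OF p b r] by (intro mult_left_mono) (simp_all add: f_def M_def c2_def)
  also have "\<dots> = ennreal (M * (c1 * c2))"
    using c M by (simp add: ennreal_mult[symmetric] mult_nonneg_nonneg mult_ac)
  also have "c1 * c2 = (2 * r) ^ n"
    unfolding c1_def c2_def using r by (intro prod_powr_complement) simp
  finally show ?thesis by (simp add: f_def M_def abs_mult)
qed

lemma abs_avg_minus_le:
  assumes b: "b \<in> borel_measurable (lebn n)" and B: "B \<in> sets (lebn n)" and v: "0 < vol n B"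
    and K: "0 \<le> K" "(\<integral>\<^sup>+ x. ennreal (\<bar>b x - c\<bar> * indicator B x) \<partial>lebn n) \<le> ennreal K"
  shows "\<bar>avg n b B - c\<bar> \<le> K / vol n B"
proof -
  have fin: "emeasure (lebn n) B < \<infinity>"
    using v by (cases "emeasure (lebn n) B = \<infinity>") (auto simp: vol_def measure_def less_top)
  have osc: "(\<integral>\<^sup>+ x. ennreal (norm (indicator B x * (b x - c))) \<partial>lebn n) \<le> ennreal K"
    using K(2) by (simp add: abs_mult mult.commute)
  have int1: "integrable (lebn n) (\<lambda>x. indicator B x * (b x - c))"
  proof (rule integrableI_bounded)
    show "(\<lambda>x. indicator B x * (b x - c)) \<in> borel_measurable (lebn n)" using b B by measurable
    show "(\<integral>\<^sup>+ x. ennreal (norm (indicator B x * (b x - c))) \<partial>lebn n) < \<infinity>"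
      using osc by (rule le_less_trans) simp
  qed
  have int2: "integrable (lebn n) (\<lambda>x. c * indicator B x)"
    using integrable_real_indicator[OF B fin] by simp
  have "(\<integral>x\<in>B. b x \<partial>lebn n) = (\<integral>x. indicator B x * (b x - c) + c * indicator B x \<partial>lebn n)"
    by (simp add: set_lebesgue_integral_def algebra_simps)
  also have "\<dots> = (\<integral>x. indicator B x * (b x - c) \<partial>lebn n) + c * vol n B"
    using int1 int2 B by (simp add: vol_def)
  finally have "avg n b B - c = (\<integral>x. indicator B x * (b x - c) \<partial>lebn n) / vol n B"
    using v by (simp add: avg_def field_simps)
  moreover have "ennreal \<bar>\<integral>x. indicator B x * (b x - c) \<partial>lebn n\<bar> \<le> ennreal K"
    using order_trans[OF integral_norm_bound_ennreal[OF int1] osc] by simp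
  then have "\<bar>\<integral>x. indicator B x * (b x - c) \<partial>lebn n\<bar> \<le> K"
    using K(1) by (simp add: ennreal_le_iff)
  ultimately show ?thesis
    using v by (simp add: abs_div divide_right_mono)
qed

lemma abs_avg_ballR_double_diff_le:
  assumes n: "1 \<le> n" and p: "\<forall>i<n. 1 < p i" and b: "b \<in> campanato n p lam"
    and r: "0 < r" and lam: "lam \<le> 0"
  shows "\<bar>avg n b (ballR n r) - avg n b (ballR n (2 * r))\<bar>
    \<le> enn2real (campanato_norm n p lam b) * ((2 * sqrt n) ^ n * (4 / sqrt n) powr (n * lam)) * r powr (n * lam)"
proof -
  define N where "N = enn2real (campanato_norm n p lam b)"
  define K where "K = N * vol n (ballR n (2 * r)) powr lam * (2 * (2 * r)) ^ n"
  have N: "0 \<le> N" by (simp add: N_def)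
  have sn: "0 < sqrt n" using n by simp
  have "(\<integral>\<^sup>+ x. ennreal (\<bar>b x - avg n b (ballR n (2 * r))\<bar> * indicator (ballR n r) x) \<partial>lebn n)
      \<le> (\<integral>\<^sup>+ x. ennreal (\<bar>b x - avg n b (ballR n (2 * r))\<bar> * indicator (ballR n (2 * r)) x) \<partial>lebn n)"
    using ballR_mono[of r "2 * r" n] r by (intro nn_integral_mono) (auto simp: indicator_def)
  also have "\<dots> \<le> ennreal K"
    using campanato_mean_oscillation_le[OF p b, of "2 * r"] r by (simp add: K_def N_def)
  finally have "\<bar>avg n b (ballR n r) - avg n b (ballR n (2 * r))\<bar> \<le> K / vol n (ballR n r)"
    using b r N by (intro abs_avg_minus_le vol_ballR_pos[OF n r] ballR_sets) (auto simp: campanato_def K_def)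
  also have "\<dots> \<le> N * (2 * (2 * r) / sqrt n) powr (n * lam) * (2 * (2 * r)) ^ n / (2 * r / sqrt n) ^ n"
  proof (rule frac_le)
    show "K \<le> N * (2 * (2 * r) / sqrt n) powr (n * lam) * (2 * (2 * r)) ^ n"
      unfolding K_def using vol_ballR_powr_bounds(2)[OF n _ lam, of "2 * r"] r N
      by (intro mult_right_mono mult_left_mono) auto
    show "(2 * r / sqrt n) ^ n \<le> vol n (ballR n r)" by (rule vol_ballR_bounds(1)[OF n r])
  qed (use r N sn in auto)
  also have "\<dots> = N * (2 * (2 * r) / sqrt n) powr (n * lam) * ((2 * (2 * r)) / (2 * r / sqrt n)) ^ n"
    by (simp only: times_divide_eq_right power_divide)
  also have "\<dots> = N * ((2 * sqrt n) ^ n * (4 / sqrt n) powr (n * lam)) * r powr (n * lam)"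
  proof -
    have "(2 * (2 * r) / sqrt n) powr (n * lam) = (4 / sqrt n) powr (n * lam) * r powr (n * lam)"
      using r sn by (simp add: powr_mult[symmetric])
    moreover have "(2 * (2 * r)) / (2 * r / sqrt n) = 2 * sqrt n"
      using r sn by (simp add: field_simps)
    ultimately have "N * (2 * (2 * r) / sqrt n) powr (n * lam) * ((2 * (2 * r)) / (2 * r / sqrt n)) ^ n
        = N * ((4 / sqrt n) powr (n * lam) * r powr (n * lam)) * (2 * sqrt n) ^ n"
      by (simp only:)
    then show ?thesis by (simp only: mult_ac)
  qed
  finally show ?thesis by (simp add: N_def)
qed

subsection \<open>Dyadic balls\<close>

lemma telescoping_geometric_bound:
  fixes a w :: "int \<Rightarrow> real"
  assumes step: "\<And>i. \<bar>a i - a (i + 1)\<bar> \<le> w i" and ratio: "\<And>i. w (i + 1) = q * w i" and q: "q < 1"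
  shows "j \<le> k \<Longrightarrow> \<bar>a j - a k\<bar> \<le> w j / (1 - q)"
proof -
  have "\<bar>a j - a (j + int d)\<bar> \<le> w j / (1 - q)" for d j
  proof (induction d arbitrary: j)
    case 0
    have "0 \<le> w j" using step[of j] by linarith
    then show ?case using q by simp
  next
    case (Suc d)
    have "\<bar>a j - a (j + int (Suc d))\<bar> \<le> \<bar>a j - a (j + 1)\<bar> + \<bar>a (j + 1) - a (j + 1 + int d)\<bar>"
      by (simp add: add.assoc)
    also have "\<dots> \<le> w j + q * w j / (1 - q)"
      using step[of j] Suc.IH[of "j + 1"] ratio[of j] by simp
    also have "\<dots> = w j / (1 - q)"
      using q by (simp add: field_simps)
    finally show ?case .
  qed
  from this[of j "nat (k - j)"] show "j \<le> k \<Longrightarrow> \<bar>a j - a k\<bar> \<le> w j / (1 - q)" by simp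
qed

definition dyadic_avg_const :: "nat \<Rightarrow> real \<Rightarrow> real" where
  "dyadic_avg_const n lam = (2 * sqrt n) ^ n * (4 / sqrt n) powr (n * lam)
     / ((1 - 2 powr (n * lam)) * 2 powr (n * lam))"

lemma dyadic_avg_const_pos:
  assumes "1 \<le> n" "lam < 0"
  shows "0 < dyadic_avg_const n lam"
proof -
  have "(2::real) powr (n * lam) < 1"
    using assms by (intro powr_less_one) (auto simp: mult_pos_neg)
  then show ?thesis using assms(1) by (simp add: dyadic_avg_const_def)
qed

lemma abs_avg_Bk_diff_le:
  assumes n: "1 \<le> n" and p: "\<forall>i<n. 1 < p i" and b: "b \<in> campanato n p lam"
    and lam: "lam < 0" and jk: "j \<le> k"
  shows "\<bar>avg n b (Bk n j) - avg n b (Bk n k)\<bar>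
    \<le> dyadic_avg_const n lam * vol n (Bk n j) powr lam * enn2real (campanato_norm n p lam b)"
proof -
  define q where "q = (2::real) powr (n * lam)"
  define N where "N = enn2real (campanato_norm n p lam b)"
  define T where "T = (2 * sqrt n) ^ n * (4 / sqrt n) powr (n * lam)"
  define w where "w i = N * T * 2 powr (real_of_int i * (n * lam))" for i :: int
  have q: "0 < q" "q < 1"
    using n lam by (auto simp: q_def mult_pos_neg intro: powr_less_one)
  have Bk_Suc: "Bk n (i + 1) = ballR n (2 * 2 powr real_of_int i)" for i
    by (simp add: Bk_def powr_add mult.commute)
  have "\<bar>avg n b (Bk n i) - avg n b (Bk n (i + 1))\<bar> \<le> w i" for i
    unfolding Bk_Suc using abs_avg_ballR_double_diff_le[OF n p b, of "2 powr real_of_int i"] lam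
    by (simp add: Bk_def w_def N_def T_def powr_powr)
  moreover have "w (i + 1) = q * w i" for i
    by (simp add: w_def q_def distrib_right powr_add)
  ultimately have "\<bar>avg n b (Bk n j) - avg n b (Bk n k)\<bar> \<le> w j / (1 - q)"
    using q jk by (intro telescoping_geometric_bound)
  also have "\<dots> = N * T / ((1 - q) * q) * (q * 2 powr (real_of_int j * (n * lam)))"
    using q by (simp add: w_def)
  also have "q * 2 powr (real_of_int j * (n * lam)) = (2 * 2 powr real_of_int j) powr (n * lam)"
    by (simp add: q_def powr_mult powr_powr)
  also have "N * T / ((1 - q) * q) * \<dots> \<le> N * T / ((1 - q) * q) * vol n (Bk n j) powr lam"
    unfolding Bk_def using n lam q by (intro mult_left_mono vol_ballR_powr_bounds(1)) (auto simp: N_def T_def)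
  finally show ?thesis by (simp add: dyadic_avg_const_def N_def T_def q_def mult_ac)
qed

lemma abs_avg_Bk_diff_le_max:
  assumes n: "1 \<le> n" and p: "\<forall>i<n. 1 < p i" and b: "b \<in> campanato n p lam" and lam: "lam < 0"
  shows "\<bar>avg n b (Bk n j) - avg n b (Bk n k)\<bar>
    \<le> dyadic_avg_const n lam * max (vol n (Bk n k) powr lam) (vol n (Bk n j) powr lam)
       * enn2real (campanato_norm n p lam b)"
proof -
  have C: "0 \<le> dyadic_avg_const n lam" using dyadic_avg_const_pos[OF n lam] by simp
  have "\<bar>avg n b (Bk n i) - avg n b (Bk n l)\<bar>
      \<le> dyadic_avg_const n lam * max (vol n (Bk n i) powr lam) (vol n (Bk n l) powr lam)
         * enn2real (campanato_norm n p lam b)" if "i \<le> l" for i l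
    using abs_avg_Bk_diff_le[OF n p b lam that] C
    by (meson enn2real_nonneg max.cobounded1 mult_left_mono mult_right_mono order_trans)
  from this[of j k] this[of k j] show ?thesis
    by (cases "j \<le> k") (simp_all add: max.commute abs_minus_commute)
qed

theorem lemma2p1:
  fixes n :: nat and p :: "nat \<Rightarrow> real" and lam :: real
  assumes "n \<ge> 1"
    and "\<forall>i<n. 1 < p i"
    and "- (1 / real n) * (\<Sum>i<n. 1 / p i) < lam" and "lam < 0"
  shows "\<exists>C>0. \<forall>b \<in> campanato n p lam. \<forall>j k :: int. \<forall>y \<in> Rn n.
           \<bar>b y - avg n b (Bk n k)\<bar> \<le> \<bar>b y - avg n b (Bk n j)\<bar>
             + C * max (vol n (Bk n k) powr lam) (vol n (Bk n j) powr lam)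
                 * enn2real (campanato_norm n p lam b)"
proof (intro exI[of _ "dyadic_avg_const n lam"] conjI ballI allI)
  show "0 < dyadic_avg_const n lam"
    using assms(1,4) by (rule dyadic_avg_const_pos)
  fix b y j k assume "b \<in> campanato n p lam"
  from abs_avg_Bk_diff_le_max[OF assms(1,2) this assms(4), of j k]
  show "\<bar>b y - avg n b (Bk n k)\<bar> \<le> \<bar>b y - avg n b (Bk n j)\<bar>
      + dyadic_avg_const n lam * max (vol n (Bk n k) powr lam) (vol n (Bk n j) powr lam)
        * enn2real (campanato_norm n p lam b)"
    by linarith
qed

end
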